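(* Let $f(x)=x^5+px^4+qx^3+rx^2+sx+t$ with real coefficients and let $D$, $L_1$, $L_2$, $L_3$, $M_1$ be as in the context. Suppose $D=0$, $L_1=0$, $L_2=0$ and $L_3\neq0$. Then all roots of $f$ are real, and: if $M_1=0$, $f$ has one quadruple root and one simple root; if $M_1\neq 0$, $f$ has one triple root and one double root.
   Context: Let $\alpha_1,\dots,\alpha_5\in\mathbb{C}$ be the roots of $f$ listed with multiplicity. $D=\prod_{1\le i<j\le 5}(\alpha_i-\alpha_j)^2$ is the discriminant of $f$. $L_3=2p^2-5q$. $L_2=40qs-16p^2s-8rp^3+38rpq+3p^2q^2-12q^3-45r^2$. $L_1=-264ps^2r-12p^3tq^2+36r^3pq-124srpq^2+28srp^3q+260sptq-132p^2qrt+240pr^2t+234sqr^2+32p^4tr+48ptq^3-56sp^3t-80q^2rt+194qs^2p^2-600str-6q^3sp^2+2p^2q^2r^2-12sr^2p^2-54r^4+320s^3-8q^3r^2-8r^3p^3+250qt^2-176q^2s^2+24q^4s-36p^4s^2-100p^2t^2$. $M_1=8p^3r-80sp^2-3p^2q^2+10prq+200sq-75r^2$. *)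

theory Defs
  imports "HOL-Computational_Algebra.Polynomial" Complex_Main
begin

definition quintic :: "real \<Rightarrow> real \<Rightarrow> real \<Rightarrow> real \<Rightarrow> real \<Rightarrow> real poly" where
  "quintic p q r s t = [:t, s, r, q, p, 1:]"

text \<open>Discriminant in terms of the roots alpha 0, ..., alpha 4 (listed with multiplicity).\<close>
definition discr5 :: "(nat \<Rightarrow> complex) \<Rightarrow> complex" where
  "discr5 \<alpha> = (\<Prod>j<5. \<Prod>i<j. (\<alpha> i - \<alpha> j)^2)"

definition L3 :: "real \<Rightarrow> real \<Rightarrow> real" where
  "L3 p q = 2*p^2 - 5*q"

definition L2 :: "real \<Rightarrow> real \<Rightarrow> real \<Rightarrow> real \<Rightarrow> real" where
  "L2 p q r s = 40*q*s - 16*p^2*s - 8*r*p^3 + 38*r*p*q + 3*p^2*q^2 - 12*q^3 - 45*r^2"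

definition L1 :: "real \<Rightarrow> real \<Rightarrow> real \<Rightarrow> real \<Rightarrow> real \<Rightarrow> real" where
  "L1 p q r s t = -264*p*s^2*r - 12*p^3*t*q^2 + 36*r^3*p*q - 124*s*r*p*q^2 + 28*s*r*p^3*q
     + 260*s*p*t*q - 132*p^2*q*r*t + 240*p*r^2*t + 234*s*q*r^2 + 32*p^4*t*r + 48*p*t*q^3
     - 56*s*p^3*t - 80*q^2*r*t + 194*q*s^2*p^2 - 600*s*t*r - 6*q^3*s*p^2 + 2*p^2*q^2*r^2
     - 12*s*r^2*p^2 - 54*r^4 + 320*s^3 - 8*q^3*r^2 - 8*r^3*p^3 + 250*q*t^2 - 176*q^2*s^2
     + 24*q^4*s - 36*p^4*s^2 - 100*p^2*t^2"

definition M1 :: "real \<Rightarrow> real \<Rightarrow> real \<Rightarrow> real \<Rightarrow> real" where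
  "M1 p q r s = 8*p^3*r - 80*s*p^2 - 3*p^2*q^2 + 10*p*r*q + 200*s*q - 75*r^2"

end

(*
  Regard the complex roots as a multiset A of size 5, so that f is the product of the
  linear factors X - u over A.  D = 0 gives a double root c, A = {c, c, x, y, z}; on such
  a multiset L1 is twice the squared Vandermonde product of c, x, y, z, so a second
  coincidence occurs, and A = {c, c, d, d, e} or A = {c, c, c, d, e}.  On both, L2 is a
  nonzero multiple of the squared Vandermonde product of c, d, e, so a third coincidence
  leaves only the root types (4,1), (3,2) and (5); type (5) has L3 = 0.  In types (4,1)
  and (3,2) with roots a, b, the number a L3 is a polynomial in p, q, r while L3 is a
  nonzero multiple of (a - b)^2, so a and then b are real.  Finally M1 vanishes on type
  (4,1) and equals -12 (a - b)^6 on type (3,2).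
*)

theory Submission
  imports Defs
begin

lemma map_poly_of_real_mult:
  "map_poly of_real (f * g) =
     (map_poly of_real f * map_poly of_real g :: 'a::{real_algebra_1,comm_ring_1} poly)"
  by (rule poly_eqI) (simp add: coeff_map_poly coeff_mult)

lemma map_poly_of_real_power:
  "map_poly of_real (f ^ n) = (map_poly of_real f ^ n :: 'a::{real_algebra_1,comm_ring_1} poly)"
  by (induction n) (simp_all add: map_poly_of_real_mult)

lemma map_poly_of_real_eq_iff:
  "map_poly of_real f = (map_poly of_real g :: 'a::real_algebra_1 poly) \<longleftrightarrow> f = g"
  by (auto simp: poly_eq_iff coeff_map_poly)

lemma map_poly_of_real_linear_power_product:
  "map_poly of_real ([:-a, 1:] ^ m * [:-b, 1:] ^ n) =
     ([:-of_real a, 1:] ^ m * [:-of_real b, 1:] ^ n :: 'a::{real_algebra_1,comm_ring_1} poly)"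
  by (simp add: map_poly_of_real_mult map_poly_of_real_power map_poly_pCons)

lemma prod_mset_linear_factors_replicate:
  "(\<Prod>u\<in>#replicate_mset m a + replicate_mset n b. [:-u, 1:]) = [:-a, 1:] ^ m * [:-b, 1:] ^ n"
  by simp

lemma size_eq_3_mset:
  assumes "size A = 3"
  obtains x y z where "A = {#x, y, z#}"
  using assms
  by (metis size_eq_Suc_imp_eq_union numeral_3_eq_3 size_add_mset nat.inject size_eq_0_iff_empty)

lemma prod_mset_linear_factors_5:
  fixes x0 :: "'a::comm_ring_1"
  shows "(\<Prod>u\<in>#{#x0, x1, x2, x3, x4#}. [:-u, 1:]) =
     [:-(x0*x1*x2*x3*x4),
       x0*x1*x2*x3 + x0*x1*x2*x4 + x0*x1*x3*x4 + x0*x2*x3*x4 + x1*x2*x3*x4,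
       -(x0*x1*x2 + x0*x1*x3 + x0*x1*x4 + x0*x2*x3 + x0*x2*x4 + x0*x3*x4
         + x1*x2*x3 + x1*x2*x4 + x1*x3*x4 + x2*x3*x4),
       x0*x1 + x0*x2 + x0*x3 + x0*x4 + x1*x2 + x1*x3 + x1*x4 + x2*x3 + x2*x4 + x3*x4,
       -(x0 + x1 + x2 + x3 + x4), 1:]"
  by (simp add: algebra_simps)

lemma monic_quintic_eq_41_iff:
  fixes a :: "'a::comm_ring_1"
  shows "[:t, s, r, q, p, 1:] = [:-a, 1:] ^ 4 * [:-b, 1:] \<longleftrightarrow>
    p = -(4*a + b) \<and> q = 6*a^2 + 4*a*b \<and> r = -(4*a^3 + 6*a^2*b) \<and>
    s = a^4 + 4*a^3*b \<and> t = -(a^4*b)"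
  by (auto simp: eval_nat_numeral algebra_simps)

lemma monic_quintic_eq_32_iff:
  fixes a :: "'a::comm_ring_1"
  shows "[:t, s, r, q, p, 1:] = [:-a, 1:] ^ 3 * [:-b, 1:] ^ 2 \<longleftrightarrow>
    p = -(3*a + 2*b) \<and> q = 3*a^2 + 6*a*b + b^2 \<and> r = -(a^3 + 6*a^2*b + 3*a*b^2) \<and>
    s = 2*a^3*b + 3*a^2*b^2 \<and> t = -(a^3*b^2)"
  by (auto simp: eval_nat_numeral algebra_simps)

text \<open>The invariants of the paper as functions of the coefficients of a monic quintic over
  an arbitrary commutative ring, so that they can be evaluated on the complex factorisation.\<close>

definition L1_poly :: "'a::comm_ring_1 poly \<Rightarrow> 'a" where
  "L1_poly f = (let p = coeff f 4; q = coeff f 3; r = coeff f 2; s = coeff f 1; t = coeff f 0 in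
     -264*p*s^2*r - 12*p^3*t*q^2 + 36*r^3*p*q - 124*s*r*p*q^2 + 28*s*r*p^3*q
     + 260*s*p*t*q - 132*p^2*q*r*t + 240*p*r^2*t + 234*s*q*r^2 + 32*p^4*t*r + 48*p*t*q^3
     - 56*s*p^3*t - 80*q^2*r*t + 194*q*s^2*p^2 - 600*s*t*r - 6*q^3*s*p^2 + 2*p^2*q^2*r^2
     - 12*s*r^2*p^2 - 54*r^4 + 320*s^3 - 8*q^3*r^2 - 8*r^3*p^3 + 250*q*t^2 - 176*q^2*s^2
     + 24*q^4*s - 36*p^4*s^2 - 100*p^2*t^2)"

definition L2_poly :: "'a::comm_ring_1 poly \<Rightarrow> 'a" where
  "L2_poly f = (let p = coeff f 4; q = coeff f 3; r = coeff f 2; s = coeff f 1 in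
     40*q*s - 16*p^2*s - 8*r*p^3 + 38*r*p*q + 3*p^2*q^2 - 12*q^3 - 45*r^2)"

definition L3_poly :: "'a::comm_ring_1 poly \<Rightarrow> 'a" where
  "L3_poly f = 2 * coeff f 4 ^ 2 - 5 * coeff f 3"

lemma L1_poly_of_real: "L1_poly (map_poly of_real f) = of_real (L1_poly f)"
  by (simp add: L1_poly_def coeff_map_poly Let_def)

lemma L2_poly_of_real: "L2_poly (map_poly of_real f) = of_real (L2_poly f)"
  by (simp add: L2_poly_def coeff_map_poly Let_def)

lemma L3_poly_of_real: "L3_poly (map_poly of_real f) = of_real (L3_poly f)"
  by (simp add: L3_poly_def coeff_map_poly)

lemma L1_poly_quintic: "L1_poly (quintic p q r s t) = L1 p q r s t"
  by (simp add: L1_def L1_poly_def quintic_def Let_def eval_nat_numeral)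

lemma L2_poly_quintic: "L2_poly (quintic p q r s t) = L2 p q r s"
  by (simp add: L2_def L2_poly_def quintic_def Let_def eval_nat_numeral)

lemma L3_poly_quintic: "L3_poly (quintic p q r s t) = L3 p q"
  by (simp add: L3_def L3_poly_def quintic_def eval_nat_numeral)

lemma L1_poly_double_root:
  fixes c :: "'a::idom"
  shows "L1_poly (\<Prod>u\<in>#{#c, c, x, y, z#}. [:-u, 1:]) =
     2 * ((c - x) * (c - y) * (c - z) * (x - y) * (x - z) * (y - z)) ^ 2"
  unfolding prod_mset_linear_factors_5 L1_poly_def by (simp add: Let_def eval_nat_numeral) algebra

lemma L2_poly_two_double_roots:
  fixes c :: "'a::idom"
  shows "L2_poly (\<Prod>u\<in>#{#c, c, d, d, e#}. [:-u, 1:]) = 4 * ((c - d) * (c - e) * (d - e)) ^ 2"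
  unfolding prod_mset_linear_factors_5 L2_poly_def by (simp add: Let_def eval_nat_numeral) algebra

lemma L2_poly_triple_root:
  fixes c :: "'a::idom"
  shows "L2_poly (\<Prod>u\<in>#{#c, c, c, d, e#}. [:-u, 1:]) = 3 * ((c - d) * (c - e) * (d - e)) ^ 2"
  unfolding prod_mset_linear_factors_5 L2_poly_def by (simp add: Let_def eval_nat_numeral) algebra

lemma L3_poly_quintuple_root: "L3_poly (\<Prod>u\<in>#replicate_mset 5 a. [:-u, 1:]) = 0"
  unfolding L3_poly_def by (simp add: numeral_eq_Suc prod_mset_linear_factors_5[simplified])

lemma two_double_roots_cases:
  fixes c d e :: "'a::{idom,ring_char_0}"
  assumes "L2_poly (\<Prod>u\<in>#{#c, c, d, d, e#}. [:-u, 1:]) = 0"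
  shows "\<exists>a b. {#c, c, d, d, e#} = replicate_mset 4 a + {#b#} \<or>
                {#c, c, d, d, e#} = replicate_mset 3 a + replicate_mset 2 b"
proof -
  from assms consider "c = d" | "c = e" | "d = e"
    unfolding L2_poly_two_double_roots by auto
  then show ?thesis
  proof cases
    case 1
    then show ?thesis by (intro exI[of _ c] exI[of _ e]) (simp add: numeral_eq_Suc)
  next
    case 2
    then show ?thesis by (intro exI[of _ c] exI[of _ d]) (simp add: numeral_eq_Suc)
  next
    case 3
    then show ?thesis by (intro exI[of _ d] exI[of _ c]) (simp add: numeral_eq_Suc)
  qed
qed

lemma triple_root_cases:
  fixes c d e :: "'a::{idom,ring_char_0}"
  assumes "L2_poly (\<Prod>u\<in>#{#c, c, c, d, e#}. [:-u, 1:]) = 0"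
  shows "\<exists>a b. {#c, c, c, d, e#} = replicate_mset 4 a + {#b#} \<or>
                {#c, c, c, d, e#} = replicate_mset 3 a + replicate_mset 2 b"
proof -
  from assms consider "c = d" | "c = e" | "d = e"
    unfolding L2_poly_triple_root by auto
  then show ?thesis
  proof cases
    case 1
    then show ?thesis by (intro exI[of _ c] exI[of _ e]) (simp add: numeral_eq_Suc)
  next
    case 2
    then show ?thesis by (intro exI[of _ c] exI[of _ d]) (simp add: numeral_eq_Suc)
  next
    case 3
    then show ?thesis by (intro exI[of _ c] exI[of _ d]) (simp add: numeral_eq_Suc)
  qed
qed

lemma double_root_cases:
  fixes c x y z :: "'a::{idom,ring_char_0}"
  assumes L1: "L1_poly (\<Prod>u\<in>#{#c, c, x, y, z#}. [:-u, 1:]) = 0"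
    and L2: "L2_poly (\<Prod>u\<in>#{#c, c, x, y, z#}. [:-u, 1:]) = 0"
  shows "\<exists>a b. {#c, c, x, y, z#} = replicate_mset 4 a + {#b#} \<or>
                {#c, c, x, y, z#} = replicate_mset 3 a + replicate_mset 2 b"
proof -
  from L1 consider "x = y" | "x = z" | "y = z" | "c = x" | "c = y" | "c = z"
    unfolding L1_poly_double_root by auto
  then show ?thesis
  proof cases
    case 1
    then show ?thesis using L2 two_double_roots_cases[of c y z] by simp
  next
    case 2
    then show ?thesis using L2 two_double_roots_cases[of c z y] by (simp add: add_mset_commute)
  next
    case 3
    then show ?thesis using L2 two_double_roots_cases[of c z x] by (simp add: add_mset_commute)
  next
    case 4
    then show ?thesis using L2 triple_root_cases[of c y z] by simp
  next
    case 5
    then show ?thesis using L2 triple_root_cases[of c x z] by (simp add: add_mset_commute)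
  next
    case 6
    then show ?thesis using L2 triple_root_cases[of c x y] by (simp add: add_mset_commute)
  qed
qed

lemma repeated_root_pattern:
  fixes A :: "'a::{idom,ring_char_0} multiset"
  assumes size: "size A = 5" and repeated: "{#c, c#} \<subseteq># A"
    and L1: "L1_poly (\<Prod>u\<in>#A. [:-u, 1:]) = 0"
    and L2: "L2_poly (\<Prod>u\<in>#A. [:-u, 1:]) = 0"
    and L3: "L3_poly (\<Prod>u\<in>#A. [:-u, 1:]) \<noteq> 0"
  shows "\<exists>a b. a \<noteq> b \<and>
           (A = replicate_mset 4 a + {#b#} \<or> A = replicate_mset 3 a + replicate_mset 2 b)"
proof -
  have "size (A - {#c, c#}) = 3"
    using size repeated by (simp add: size_Diff_submset)
  then obtain x y z where "A - {#c, c#} = {#x, y, z#}"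
    by (rule size_eq_3_mset)
  then have A: "A = {#c, c, x, y, z#}"
    using repeated by (metis subset_mset.add_diff_inverse add_mset_add_single
        union_mset_add_mset_left union_mset_add_mset_right add_0)
  obtain a b where pattern:
    "A = replicate_mset 4 a + {#b#} \<or> A = replicate_mset 3 a + replicate_mset 2 b"
    using double_root_cases L1 L2 unfolding A by blast
  moreover have "a \<noteq> b"
  proof
    assume "a = b"
    with pattern have "A = replicate_mset 5 a"
      by (auto simp: numeral_eq_Suc)
    with L3 show False
      by (metis L3_poly_quintuple_root)
  qed
  ultimately show ?thesis by blast
qed

lemma real_factorization_41:
  fixes a b :: complex
  assumes factors: "map_poly of_real (quintic p q r s t) = [:-a, 1:] ^ 4 * [:-b, 1:]"
    and L3: "L3 p q \<noteq> 0"
  obtains a' b' where "a = of_real a'" "b = of_real b'"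
    "quintic p q r s t = [:-a', 1:] ^ 4 * [:-b', 1:]"
proof -
  have "[:of_real t, of_real s, of_real r, of_real q, of_real p, 1:] = [:-a, 1:] ^ 4 * [:-b, 1:]"
    using factors by (simp add: quintic_def map_poly_pCons)
  then have p: "of_real p = -(4*a + b)" and q: "of_real q = 6*a^2 + 4*a*b"
    and r: "of_real r = -(4*a^3 + 6*a^2*b)"
    unfolding monic_quintic_eq_41_iff by simp_all
  have "a * of_real (2 * L3 p q) = of_real (5*r - p*q)"
    by (simp add: L3_def p q r) algebra
  with L3 have "a = of_real ((5*r - p*q) / (2 * L3 p q))"
    by (simp add: eq_divide_eq)
  then obtain a' where a: "a = of_real a'" by blast
  have "b = of_real (- p - 4*a')"
    using p unfolding a by simp
  then obtain b' where b: "b = of_real b'" by blast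
  have "map_poly complex_of_real (quintic p q r s t) = map_poly of_real ([:-a', 1:] ^ 4 * [:-b', 1:] ^ 1)"
    unfolding map_poly_of_real_linear_power_product using factors unfolding a b
    by (simp only: power_one_right)
  then have "quintic p q r s t = [:-a', 1:] ^ 4 * [:-b', 1:]"
    by (simp only: map_poly_of_real_eq_iff power_one_right)
  with a b show ?thesis by (rule that)
qed

lemma real_factorization_32:
  fixes a b :: complex
  assumes factors: "map_poly of_real (quintic p q r s t) = [:-a, 1:] ^ 3 * [:-b, 1:] ^ 2"
    and L3: "L3 p q \<noteq> 0"
  obtains a' b' where "a = of_real a'" "b = of_real b'"
    "quintic p q r s t = [:-a', 1:] ^ 3 * [:-b', 1:] ^ 2"
proof -
  have "[:of_real t, of_real s, of_real r, of_real q, of_real p, 1:] = [:-a, 1:] ^ 3 * [:-b, 1:] ^ 2"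
    using factors by (simp add: quintic_def map_poly_pCons)
  then have p: "of_real p = -(3*a + 2*b)" and q: "of_real q = 3*a^2 + 6*a*b + b^2"
    and r: "of_real r = -(a^3 + 6*a^2*b + 3*a*b^2)"
    unfolding monic_quintic_eq_32_iff by simp_all
  have "a * of_real (L3 p q) = of_real (2*p^3 - 8*p*q + 15*r)"
    by (simp add: L3_def p q r) algebra
  with L3 have "a = of_real ((2*p^3 - 8*p*q + 15*r) / L3 p q)"
    by (simp add: eq_divide_eq)
  then obtain a' where a: "a = of_real a'" by blast
  have "b = of_real (- (p + 3*a') / 2)"
    using p unfolding a by simp
  then obtain b' where b: "b = of_real b'" by blast
  have "map_poly complex_of_real (quintic p q r s t) = map_poly of_real ([:-a', 1:] ^ 3 * [:-b', 1:] ^ 2)"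
    unfolding map_poly_of_real_linear_power_product using factors unfolding a b .
  then have "quintic p q r s t = [:-a', 1:] ^ 3 * [:-b', 1:] ^ 2"
    by (simp only: map_poly_of_real_eq_iff)
  with a b show ?thesis by (rule that)
qed

lemma M1_quintic_41: "quintic p q r s t = [:-a, 1:] ^ 4 * [:-b, 1:] \<Longrightarrow> M1 p q r s = 0"
  unfolding quintic_def monic_quintic_eq_41_iff M1_def by (elim conjE) algebra

lemma M1_quintic_32:
  "quintic p q r s t = [:-a, 1:] ^ 3 * [:-b, 1:] ^ 2 \<Longrightarrow> M1 p q r s = -12 * (a - b) ^ 6"
  unfolding quintic_def monic_quintic_eq_32_iff M1_def by (elim conjE) algebra

lemma discr5_eq_0_repeated_root:
  assumes "discr5 \<alpha> = 0"
  obtains c where "{#c, c#} \<subseteq># image_mset \<alpha> (mset_set {..<5})"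
proof -
  obtain i j where "j < 5" "i < j" "\<alpha> i = \<alpha> j"
    using assms by (auto simp: discr5_def)
  then have "{#\<alpha> i, \<alpha> i#} = image_mset \<alpha> (mset_set {i, j})"
    by simp
  also have "\<dots> \<subseteq># image_mset \<alpha> (mset_set {..<5})"
    using \<open>j < 5\<close> \<open>i < j\<close>
    by (intro image_mset_subseteq_mono, subst msubset_mset_set_iff) auto
  finally show ?thesis by (rule that)
qed

lemma real_quintic_root_pattern:
  fixes A :: "complex multiset"
  assumes roots: "map_poly of_real (quintic p q r s t) = (\<Prod>u\<in>#A. [:-u, 1:])"
    and size: "size A = 5" and repeated: "{#c, c#} \<subseteq># A"
    and L1: "L1 p q r s t = 0" and L2: "L2 p q r s = 0" and L3: "L3 p q \<noteq> 0"
  obtains a b :: real where "a \<noteq> b" "set_mset A \<subseteq> {of_real a, of_real b}"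
    "quintic p q r s t = [:-a, 1:] ^ 4 * [:-b, 1:] \<or>
     quintic p q r s t = [:-a, 1:] ^ 3 * [:-b, 1:] ^ 2"
proof -
  have "L1_poly (\<Prod>u\<in>#A. [:-u, 1:]) = 0" "L2_poly (\<Prod>u\<in>#A. [:-u, 1:]) = 0"
    "L3_poly (\<Prod>u\<in>#A. [:-u, 1:]) \<noteq> 0"
    using L1 L2 L3 unfolding roots[symmetric] L1_poly_of_real L2_poly_of_real L3_poly_of_real
      L1_poly_quintic L2_poly_quintic L3_poly_quintic by simp_all
  with size repeated obtain a b where "a \<noteq> b"
    and pattern: "A = replicate_mset 4 a + {#b#} \<or> A = replicate_mset 3 a + replicate_mset 2 b"
    by (metis repeated_root_pattern)
  from pattern show ?thesis
  proof
    assume "A = replicate_mset 4 a + {#b#}"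
    then have "map_poly of_real (quintic p q r s t) = [:-a, 1:] ^ 4 * [:-b, 1:]"
      using roots prod_mset_linear_factors_replicate[of 4 a 1 b] by simp
    then obtain a' b' where a: "a = of_real a'" and b: "b = of_real b'"
      and "quintic p q r s t = [:-a', 1:] ^ 4 * [:-b', 1:]"
      using L3 by (rule real_factorization_41)
    moreover have "set_mset A \<subseteq> {of_real a', of_real b'}"
      using \<open>A = replicate_mset 4 a + {#b#}\<close> unfolding a b by simp
    moreover have "a' \<noteq> b'"
      using \<open>a \<noteq> b\<close> unfolding a b by simp
    ultimately show ?thesis using that by blast
  next
    assume "A = replicate_mset 3 a + replicate_mset 2 b"
    then have "map_poly of_real (quintic p q r s t) = [:-a, 1:] ^ 3 * [:-b, 1:] ^ 2"
      using roots prod_mset_linear_factors_replicate[of 3 a 2 b] by simp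
    then obtain a' b' where a: "a = of_real a'" and b: "b = of_real b'"
      and "quintic p q r s t = [:-a', 1:] ^ 3 * [:-b', 1:] ^ 2"
      using L3 by (rule real_factorization_32)
    moreover have "set_mset A \<subseteq> {of_real a', of_real b'}"
      using \<open>A = replicate_mset 3 a + replicate_mset 2 b\<close> unfolding a b by simp
    moreover have "a' \<noteq> b'"
      using \<open>a \<noteq> b\<close> unfolding a b by simp
    ultimately show ?thesis using that by blast
  qed
qed

theorem mainTheorem4:
  fixes p q r s t :: real and \<alpha> :: "nat \<Rightarrow> complex"
  assumes roots: "map_poly complex_of_real (quintic p q r s t) = (\<Prod>i<5. [:- \<alpha> i, 1:])"
    and D0: "discr5 \<alpha> = 0"
    and L10: "L1 p q r s t = 0"
    and L20: "L2 p q r s = 0"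
    and L3nz: "L3 p q \<noteq> 0"
  shows "(\<forall>i<5. \<alpha> i \<in> \<real>)
    \<and> (M1 p q r s = 0 \<longrightarrow>
         (\<exists>a b :: real. a \<noteq> b \<and> quintic p q r s t = [:-a, 1:]^4 * [:-b, 1:]))
    \<and> (M1 p q r s \<noteq> 0 \<longrightarrow>
         (\<exists>a b :: real. a \<noteq> b \<and> quintic p q r s t = [:-a, 1:]^3 * [:-b, 1:]^2))"
proof -
  define A where "A = image_mset \<alpha> (mset_set {..<5})"
  have f: "map_poly of_real (quintic p q r s t) = (\<Prod>u\<in>#A. [:-u, 1:])"
    using roots by (simp add: A_def prod_unfold_prod_mset image_mset.compositionality comp_def)
  obtain c where repeated: "{#c, c#} \<subseteq># A"
    using D0 unfolding A_def by (rule discr5_eq_0_repeated_root)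
  have size: "size A = 5" by (simp add: A_def)
  obtain a b where "a \<noteq> b" and A_real: "set_mset A \<subseteq> {of_real a, of_real b}"
    and factors: "quintic p q r s t = [:-a, 1:] ^ 4 * [:-b, 1:] \<or>
                  quintic p q r s t = [:-a, 1:] ^ 3 * [:-b, 1:] ^ 2"
    using f size repeated L10 L20 L3nz by (rule real_quintic_root_pattern)
  have "\<alpha> i \<in> \<real>" if "i < 5" for i
  proof -
    have "\<alpha> i \<in># A" using that by (simp add: A_def)
    with A_real show ?thesis by auto
  qed
  moreover have "M1 p q r s = 0 \<longleftrightarrow> quintic p q r s t = [:-a, 1:] ^ 4 * [:-b, 1:]"
  proof
    assume "M1 p q r s = 0"
    with factors \<open>a \<noteq> b\<close> show "quintic p q r s t = [:-a, 1:] ^ 4 * [:-b, 1:]"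
      by (auto dest: M1_quintic_32)
  qed (rule M1_quintic_41)
  ultimately show ?thesis
    using factors \<open>a \<noteq> b\<close> by blast
qed

end
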